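(* Consider the distributed quantized weight-balancing algorithm described in the context on a strongly connected digraph, with step-size $\gamma(k)=2^{-n}$ for $2^n-1\le k\le 2^{n+1}-2$. Then the sequence of weight matrices $\{\mathbf{A}(k)\}_{k\in\mathbb{Z}_+}$, $\mathbf{A}(k)=(a_{ij}(k))$, is bounded.
   Context: $\mathcal{G}=(\mathcal{V},\mathcal{E})$, $\mathcal{V}=\{1,\dots,N\}$, no self-loops, strongly connected; $\mathcal{N}_i^-=\{j:(j,i)\in\mathcal{E}\}$, $\mathcal{N}_i^+=\{j:(i,j)\in\mathcal{E}\}$, $d_i^+=|\mathcal{N}_i^+|$. Algorithm: $a_{ij}(0)=1$ if $j\in\mathcal{N}_i^-$ and $0$ otherwise; $b_i(k)=\sum_{j\in\mathcal{N}_i^-}a_{ij}(k)-\sum_{j\in\mathcal{N}_i^+}a_{ji}(k)$; $n_i(k)=1$ if $b_i(k)\ge d_i^+\gamma(k)$, else $0$; $a_{ij}(k+1)=a_{ij}(k)+n_j(k)\gamma(k)$ for $j\in\mathcal{N}_i^-$ (other entries remain $0$). *)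

theory Defs
  imports Complex_Main
begin

definition gamma :: "nat \<Rightarrow> real" where
  "gamma k = 1 / 2 ^ (THE n::nat. 2 ^ n - 1 \<le> k \<and> k \<le> 2 ^ (n + 1) - 2)"

text \<open>In- and out-neighbourhoods; an edge (j,i) goes from j to i.\<close>
definition in_nbrs :: "('v \<times> 'v) set \<Rightarrow> 'v \<Rightarrow> 'v set" where
  "in_nbrs E i = {j. (j, i) \<in> E}"
definition out_nbrs :: "('v \<times> 'v) set \<Rightarrow> 'v \<Rightarrow> 'v set" where
  "out_nbrs E i = {j. (i, j) \<in> E}"
definition out_deg :: "('v \<times> 'v) set \<Rightarrow> 'v \<Rightarrow> nat" where
  "out_deg E i = card (out_nbrs E i)"

definition imbalance :: "('v \<times> 'v) set \<Rightarrow> ('v \<Rightarrow> 'v \<Rightarrow> real) \<Rightarrow> 'v \<Rightarrow> real" where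
  "imbalance E A i = (\<Sum>j\<in>in_nbrs E i. A i j) - (\<Sum>j\<in>out_nbrs E i. A j i)"

definition nflag :: "('v \<times> 'v) set \<Rightarrow> ('v \<Rightarrow> 'v \<Rightarrow> real) \<Rightarrow> nat \<Rightarrow> 'v \<Rightarrow> real" where
  "nflag E A k i = (if imbalance E A i \<ge> real (out_deg E i) * gamma k then 1 else 0)"

primrec wb :: "('v \<times> 'v) set \<Rightarrow> nat \<Rightarrow> 'v \<Rightarrow> 'v \<Rightarrow> real" where
  "wb E 0 = (\<lambda>i j. if j \<in> in_nbrs E i then 1 else 0)"
| "wb E (Suc k) = (\<lambda>i j. if j \<in> in_nbrs E i
      then wb E k i j + nflag E (wb E k) k j * gamma k else 0)"

end

theory Submission
  imports Defs
begin

text \<open>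
  All out-edges of a node j carry the same weight x_j, which starts at 1 and only grows.
  The imbalances always sum to zero, and a node that has ever increased its weight keeps a
  nonnegative imbalance afterwards: it only fires when its imbalance is at least
  d_j^+ \<gamma>(k), which is exactly what firing costs it. Hence every imbalance is bounded below
  by -d_j^+ and therefore above by D = \<Sum>_j d_j^+, and along an edge (j,i) this gives
  x_j \<le> b_i + d_i^+ x_i \<le> (N + D) x_i with N the number of nodes. As long as some node
  still has weight 1, strong connectivity thus bounds all weights by (N + D)^|E|. Once every
  weight exceeds 1, all imbalances are nonnegative with sum zero, hence zero, and no node
  fires any more.
\<close>

lemma gamma_pos: "0 < gamma k"
  unfolding gamma_def by simp

lemma gamma_le_1: "gamma k \<le> 1"
  unfolding gamma_def by simp

primrec out_weight :: "('v \<times> 'v) set \<Rightarrow> nat \<Rightarrow> 'v \<Rightarrow> real" where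
  "out_weight E 0 j = 1"
| "out_weight E (Suc k) j = out_weight E k j + nflag E (wb E k) k j * gamma k"

lemma wb_eq_out_weight: "wb E k i j = (if (j, i) \<in> E then out_weight E k j else 0)"
  by (induction k) (auto simp: in_nbrs_def)

lemma nflag_gamma_nonneg: "0 \<le> nflag E A k j * gamma k"
  using gamma_pos[of k] by (simp add: nflag_def)

lemma nflag_gamma_le_1: "nflag E A k j * gamma k \<le> 1"
  using gamma_le_1[of k] by (simp add: nflag_def)

lemma out_weight_ge_1: "1 \<le> out_weight E k j"
  by (induction k) (simp_all add: add_increasing2 nflag_gamma_nonneg)

lemma sum_imbalance_eq_0:
  fixes E :: "('v::finite \<times> 'v) set"
  shows "(\<Sum>i\<in>UNIV. imbalance E A i) = 0"
proof -
  have "(\<Sum>i\<in>UNIV. \<Sum>j\<in>in_nbrs E i. A i j) = (\<Sum>(i, j)\<in>converse E. A i j)"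
    by (subst sum.Sigma) (auto simp: in_nbrs_def intro: sum.cong)
  also have "\<dots> = (\<Sum>(j, i)\<in>E. A i j)"
  proof -
    have "converse E = prod.swap ` E" by auto
    then show ?thesis by (simp add: sum.reindex case_prod_unfold)
  qed
  also have "\<dots> = (\<Sum>i\<in>UNIV. \<Sum>j\<in>out_nbrs E i. A j i)"
    by (subst sum.Sigma) (auto simp: out_nbrs_def intro: sum.cong)
  finally show ?thesis
    by (simp add: imbalance_def sum_subtractf)
qed

lemma imbalance_wb:
  fixes E :: "('v::finite \<times> 'v) set"
  shows "imbalance E (wb E k) i
    = (\<Sum>j\<in>in_nbrs E i. out_weight E k j) - real (out_deg E i) * out_weight E k i"
proof -
  have "(\<Sum>j\<in>in_nbrs E i. wb E k i j) = (\<Sum>j\<in>in_nbrs E i. out_weight E k j)"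
    by (rule sum.cong) (auto simp: wb_eq_out_weight in_nbrs_def)
  moreover have "(\<Sum>j\<in>out_nbrs E i. wb E k j i) = (\<Sum>j\<in>out_nbrs E i. out_weight E k i)"
    by (rule sum.cong) (auto simp: wb_eq_out_weight out_nbrs_def)
  ultimately show ?thesis
    by (simp add: imbalance_def out_deg_def)
qed

lemma imbalance_wb_Suc:
  fixes E :: "('v::finite \<times> 'v) set"
  shows "imbalance E (wb E (Suc k)) i = imbalance E (wb E k) i
     + (\<Sum>j\<in>in_nbrs E i. nflag E (wb E k) k j * gamma k)
     - real (out_deg E i) * (nflag E (wb E k) k i * gamma k)"
  unfolding imbalance_wb out_weight.simps sum.distrib by (simp add: algebra_simps)

lemma imbalance_nonneg_if_raised:
  fixes E :: "('v::finite \<times> 'v) set"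
  assumes "1 < out_weight E k i"
  shows "0 \<le> imbalance E (wb E k) i"
  using assms
proof (induction k)
  case 0
  then show ?case by simp
next
  case (Suc k)
  have incoming: "0 \<le> (\<Sum>j\<in>in_nbrs E i. nflag E (wb E k) k j * gamma k)"
    by (simp add: sum_nonneg nflag_gamma_nonneg)
  show ?case
  proof (cases "real (out_deg E i) * gamma k \<le> imbalance E (wb E k) i")
    case True
    then show ?thesis
      using incoming unfolding imbalance_wb_Suc by (simp add: nflag_def)
  next
    case False
    then have "nflag E (wb E k) k i = 0"
      by (simp add: nflag_def)
    then show ?thesis
      using Suc incoming unfolding imbalance_wb_Suc by simp
  qed
qed

lemma imbalance_ge_neg_out_deg:
  fixes E :: "('v::finite \<times> 'v) set"
  shows "- real (out_deg E i) \<le> imbalance E (wb E k) i"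
proof (cases "out_weight E k i = 1")
  case True
  have "0 \<le> (\<Sum>j\<in>in_nbrs E i. out_weight E k j)"
    by (intro sum_nonneg order_trans[OF zero_le_one out_weight_ge_1])
  with True show ?thesis
    by (simp add: imbalance_wb)
next
  case False
  then have "1 < out_weight E k i"
    using out_weight_ge_1[of E k i] by simp
  then show ?thesis
    using imbalance_nonneg_if_raised[of E k i] by simp
qed

lemma imbalance_le_sum_out_deg:
  fixes E :: "('v::finite \<times> 'v) set"
  shows "imbalance E (wb E k) i \<le> (\<Sum>j\<in>UNIV. real (out_deg E j))"
proof -
  have "imbalance E (wb E k) i = - (\<Sum>j\<in>UNIV - {i}. imbalance E (wb E k) j)"
    using sum_imbalance_eq_0[of E "wb E k"] sum.remove[of UNIV i "imbalance E (wb E k)"]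
    by simp
  also have "\<dots> \<le> (\<Sum>j\<in>UNIV - {i}. real (out_deg E j))"
    using sum_mono[of "UNIV - {i}" "\<lambda>j. - real (out_deg E j)" "imbalance E (wb E k)"]
    by (simp add: imbalance_ge_neg_out_deg sum_negf)
  also have "\<dots> \<le> (\<Sum>j\<in>UNIV. real (out_deg E j))"
    by (rule sum_mono2) auto
  finally show ?thesis .
qed

definition edge_ratio :: "('v::finite \<times> 'v) set \<Rightarrow> real" where
  "edge_ratio E = real (card (UNIV :: 'v set)) + (\<Sum>j\<in>UNIV. real (out_deg E j))"

lemma edge_ratio_ge_1:
  fixes E :: "('v::finite \<times> 'v) set"
  shows "1 \<le> edge_ratio E"
proof -
  have "1 \<le> real (card (UNIV :: 'v set))"
    by (simp add: Suc_le_eq card_gt_0_iff)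
  then show ?thesis
    unfolding edge_ratio_def by (simp add: add_increasing2 sum_nonneg)
qed

lemma out_weight_edge_le:
  fixes E :: "('v::finite \<times> 'v) set"
  assumes "(j, i) \<in> E"
  shows "out_weight E k j \<le> edge_ratio E * out_weight E k i"
proof -
  let ?x = "out_weight E k" and ?D = "\<Sum>j\<in>UNIV. real (out_deg E j)"
  have x_nonneg: "0 \<le> ?x v" for v
    using out_weight_ge_1[of E k v] by simp
  have "?x j \<le> (\<Sum>j\<in>in_nbrs E i. ?x j)"
    using assms x_nonneg by (intro member_le_sum) (auto simp: in_nbrs_def)
  also have "\<dots> = imbalance E (wb E k) i + real (out_deg E i) * ?x i"
    by (simp add: imbalance_wb)
  also have "\<dots> \<le> ?D * ?x i + real (card (UNIV :: 'v set)) * ?x i"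
  proof (rule add_mono)
    have "?D \<le> ?D * ?x i"
      using mult_left_mono[OF out_weight_ge_1[of E k i], of ?D] by (simp add: sum_nonneg)
    then show "imbalance E (wb E k) i \<le> ?D * ?x i"
      using imbalance_le_sum_out_deg[of E k i] by linarith
    have "out_deg E i \<le> card (UNIV :: 'v set)"
      unfolding out_deg_def by (rule card_mono) auto
    then show "real (out_deg E i) * ?x i \<le> real (card (UNIV :: 'v set)) * ?x i"
      using x_nonneg by (intro mult_right_mono) auto
  qed
  also have "\<dots> = edge_ratio E * ?x i"
    by (simp add: edge_ratio_def distrib_right)
  finally show ?thesis .
qed

lemma out_weight_relpow_le:
  fixes E :: "('v::finite \<times> 'v) set"
  assumes "(j, i) \<in> E ^^ n"
  shows "out_weight E k j \<le> edge_ratio E ^ n * out_weight E k i"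
  using assms
proof (induction n arbitrary: i)
  case 0
  then show ?case by simp
next
  case (Suc n)
  then obtain m where path: "(j, m) \<in> E ^^ n" and edge: "(m, i) \<in> E"
    by auto
  have "out_weight E k j \<le> edge_ratio E ^ n * out_weight E k m"
    using Suc.IH[OF path] .
  also have "\<dots> \<le> edge_ratio E ^ n * (edge_ratio E * out_weight E k i)"
    using out_weight_edge_le[OF edge] edge_ratio_ge_1[of E]
    by (intro mult_left_mono) auto
  finally show ?case
    by (simp add: algebra_simps)
qed

lemma out_weight_le_if_some_unraised:
  fixes E :: "('v::finite \<times> 'v) set"
  assumes strongly_connected: "\<forall>u v. (u, v) \<in> E\<^sup>*"
    and "out_weight E k i = 1"
  shows "out_weight E k j \<le> edge_ratio E ^ card E"
proof -
  have "(j, i) \<in> E\<^sup>*"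
    using strongly_connected by blast
  then obtain n where "n \<le> card E" and path: "(j, i) \<in> E ^^ n"
    by (auto simp: rtrancl_finite_eq_relpow)
  then have "edge_ratio E ^ n \<le> edge_ratio E ^ card E"
    by (intro power_increasing edge_ratio_ge_1)
  then show ?thesis
    using out_weight_relpow_le[OF path, of k] assms(2) by simp
qed

lemma nflag_eq_0_if_all_raised:
  fixes E :: "('v::finite \<times> 'v) set"
  assumes out_deg_pos: "\<forall>v. 0 < out_deg E v"
    and raised: "\<forall>v. 1 < out_weight E k v"
  shows "nflag E (wb E k) k i = 0"
proof -
  have "\<forall>v\<in>UNIV. 0 \<le> imbalance E (wb E k) v"
    using raised imbalance_nonneg_if_raised by blast
  then have "imbalance E (wb E k) i = 0"
    using sum_imbalance_eq_0[of E "wb E k"] by (simp add: sum_nonneg_eq_0_iff)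
  moreover have "0 < real (out_deg E i) * gamma k"
    using out_deg_pos gamma_pos[of k] by simp
  ultimately show ?thesis
    by (simp add: nflag_def)
qed

lemma out_deg_pos:
  fixes E :: "('v::finite \<times> 'v) set"
  assumes no_loops: "\<forall>v. (v, v) \<notin> E"
    and strongly_connected: "\<forall>u v. (u, v) \<in> E\<^sup>*"
    and "E \<noteq> {}"
  shows "0 < out_deg E i"
proof -
  obtain a b where "(a, b) \<in> E"
    using \<open>E \<noteq> {}\<close> by auto
  with no_loops have "a \<noteq> i \<or> b \<noteq> i"
    by auto
  then obtain v where "v \<noteq> i"
    by blast
  moreover have "(i, v) \<in> E\<^sup>*"
    using strongly_connected by blast
  ultimately obtain w where "(i, w) \<in> E"
    by (metis converse_rtranclE)
  then show ?thesis
    unfolding out_deg_def out_nbrs_def by (auto simp: card_gt_0_iff)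
qed

lemma out_weight_bounded:
  fixes E :: "('v::finite \<times> 'v) set"
  assumes out_deg_pos: "\<forall>v. 0 < out_deg E v"
    and strongly_connected: "\<forall>u v. (u, v) \<in> E\<^sup>*"
  shows "out_weight E k j \<le> edge_ratio E ^ card E + 1"
proof (induction k arbitrary: j)
  case 0
  have "0 \<le> edge_ratio E ^ card E"
    using edge_ratio_ge_1[of E] by simp
  then show ?case by simp
next
  case (Suc k)
  show ?case
  proof (cases "\<exists>i. out_weight E k i = 1")
    case True
    then have "out_weight E k j \<le> edge_ratio E ^ card E"
      using out_weight_le_if_some_unraised[OF strongly_connected] by blast
    then show ?thesis
      using nflag_gamma_le_1[of E "wb E k" k j] by simp
  next
    case False
    then have "\<forall>v. 1 < out_weight E k v"
      using out_weight_ge_1[of E k] by (metis order.not_eq_order_implies_strict)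
    then show ?thesis
      using Suc.IH nflag_eq_0_if_all_raised[OF out_deg_pos] by simp
  qed
qed

theorem lemma4:
  fixes E :: "('v::finite \<times> 'v) set"
  assumes no_loops: "\<forall>v. (v, v) \<notin> E"
    and strongly_connected: "\<forall>u v. (u, v) \<in> E\<^sup>*"
  shows "\<exists>M. \<forall>k i j. \<bar>wb E k i j\<bar> \<le> M"
proof (cases "E = {}")
  case True
  then show ?thesis
    by (intro exI[of _ 0]) (simp add: wb_eq_out_weight)
next
  case False
  then have "\<forall>v. 0 < out_deg E v"
    using out_deg_pos[OF no_loops strongly_connected] by blast
  then have "\<bar>wb E k i j\<bar> \<le> edge_ratio E ^ card E + 1" for k i j
    using out_weight_bounded[OF _ strongly_connected] out_weight_ge_1[of E k j]
      edge_ratio_ge_1[of E]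
    by (simp add: wb_eq_out_weight)
  then show ?thesis
    by blast
qed

end
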